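(* Let $T>0$, $A\in\mathbb R$, let the Hamiltonians satisfy (H), let $u_0$ be Lipschitz continuous, and assume the CFL condition (CFLr) holds. Let $u^\varepsilon$ be the solution of the scheme (S) with $F=F_A$ and let $u$ be a viscosity super-solution of (P$_{F_A}$)-(IC) satisfying, for some $C_T>0$, $u(t,x)\ge-C_T(1+d(0,x))$ for all $t\in(0,T)$, $x\in J$. Then there exists $C=C(T)>0$ such that for all $(t,x)\in\mathcal G_\varepsilon$ with $t\le T$ and all $(s,y)\in[0,T)\times J$, $$u^\varepsilon(t,x)\le u(s,y)+C(1+d(x,y)).$$
   Context: Junction: $J=\bigcup_{\alpha=1}^NJ_\alpha$, $N$ copies of $[0,\infty)$ glued at $0$; $d(x,y)=|x-y|$ on the same branch, $|x|+|y|$ otherwise; $\partial_\alpha u$ is the derivative along $J_\alpha$, $u_x=\partial_\alpha u$ off $0$ and $u_x=(\partial_1u,\dots,\partial_Nu)$ at $0$. Hamiltonians (H): $H_\alpha$ Lipschitz, coercive, quasi-convex; $p_0^\alpha$ a minimum point; $H_\alpha^\mp(p)=H_\alpha(\min/\max(p,p_0^\alpha))$; $F_A(p)=\max(A,\max_\alpha H_\alpha^-(p_\alpha))$. (P$_{F}$)-(IC): $u_t+H_\alpha(u_x)=0$ in $(0,T)\times(J_\alpha\setminus\{0\})$, $u_t+F(u_x)=0$ on $(0,T)\times\{0\}$, $u(0,\cdot)=u_0$. Viscosity super-solution: for every $\varphi$ continuous on $(0,T)\times J$ and $C^1$ on each $(0,T)\times J_\alpha$ with $u_*\ge\varphi$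 near $(t_0,x_0)$, $t_0>0$, equality at $(t_0,x_0)$, one has $\varphi_t+H_\alpha(\varphi_x)\ge0$ if $x_0\in J_\alpha\setminus\{0\}$ and $\varphi_t+F(\varphi_x)\ge0$ if $x_0=0$; and $u_*(0,\cdot)\ge u_0$. Scheme (S) with $F=F_A$: $\mathcal G_\varepsilon=\{n\Delta t\}\times\{x_i^\alpha\}$, $u^\varepsilon(n\Delta t,x_i^\alpha)=U_i^{\alpha,n}$, $U_0^{\alpha,n}=U_0^n$; $\frac{U_i^{\alpha,n+1}-U_i^{\alpha,n}}{\Delta t}+\max\{H_\alpha^+(p_{i,-}^{\alpha,n}),H_\alpha^-(p_{i,+}^{\alpha,n})\}=0$ ($i\ge1$), $\frac{U_0^{n+1}-U_0^n}{\Delta t}+F_A(p_{0,+}^{1,n},\dots,p_{0,+}^{N,n})=0$, $U_i^{\alpha,0}=u_0(x_i^\alpha)$, with $p_{i,\pm}^{\alpha,n}$ forward/backward differences. (CFLr) is the CFL condition $\frac{\Delta x}{\Delta t}\ge\max\{\max_\alpha\sup_{[\underline p_\alpha,\overline p_\alpha]}|H_\alpha'|,\sup_{\prod_\alpha[\underline p^0_\alpha,\overline p_\alpha]}(-\sum_\beta\partial_{p_\beta}F_A)\}$ with bounds $\underline p_\alpha,\overline p_\alpha,\underline p^0_\alpha$ depending only on $u_0$, the $H_\alpha$ and $F_A$, which makes the scheme monotone. *)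

theory Defs
  imports "HOL-Analysis.Analysis"
begin

text \<open>Branches are indexed by a finite type 'n (so N = CARD('n) >= 1).
  A point of the junction is either the junction point Jo, or a point Br a x
  at distance x > 0 from Jo on the branch J_a.\<close>

datatype 'n jpt = Jo | Br 'n real

definition J :: "'n jpt set" where
  "J = {Jo} \<union> {Br a x | a x. 0 < x}"

definition pt :: "'n \<Rightarrow> real \<Rightarrow> 'n jpt" where
  "pt a x = (if x = 0 then Jo else Br a x)"

fun jabs :: "'n jpt \<Rightarrow> real" where
  "jabs Jo = 0"
| "jabs (Br a x) = x"

fun jbranch :: "'n jpt \<Rightarrow> 'n option" where
  "jbranch Jo = None"
| "jbranch (Br a x) = Some a"

definition jdist :: "'n jpt \<Rightarrow> 'n jpt \<Rightarrow> real" where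
  "jdist x y = (if jbranch x = jbranch y \<or> x = Jo \<or> y = Jo
                then \<bar>jabs x - jabs y\<bar> else jabs x + jabs y)"

definition Hminus :: "('n \<Rightarrow> real \<Rightarrow> real) \<Rightarrow> ('n \<Rightarrow> real) \<Rightarrow> 'n \<Rightarrow> real \<Rightarrow> real" where
  "Hminus H p0 a p = H a (min p (p0 a))"

definition Hplus :: "('n \<Rightarrow> real \<Rightarrow> real) \<Rightarrow> ('n \<Rightarrow> real) \<Rightarrow> 'n \<Rightarrow> real \<Rightarrow> real" where
  "Hplus H p0 a p = H a (max p (p0 a))"

definition FA :: "('n::finite \<Rightarrow> real \<Rightarrow> real) \<Rightarrow> ('n \<Rightarrow> real) \<Rightarrow> real \<Rightarrow> real ^ 'n \<Rightarrow> real" where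
  "FA H p0 A p = max A (Max (range (\<lambda>a. Hminus H p0 a (p $ a))))"

definition hyp_H :: "('n \<Rightarrow> real \<Rightarrow> real) \<Rightarrow> ('n \<Rightarrow> real) \<Rightarrow> bool" where
  "hyp_H H p0 \<longleftrightarrow> (\<forall>a.
      (\<exists>L. \<forall>p q. \<bar>H a p - H a q\<bar> \<le> L * \<bar>p - q\<bar>)
    \<and> filterlim (H a) at_top at_infinity
    \<and> (\<forall>c. convex {p. H a p \<le> c})
    \<and> (\<forall>p. H a (p0 a) \<le> H a p))"

definition jlipschitz :: "('n jpt \<Rightarrow> real) \<Rightarrow> bool" where
  "jlipschitz u0 \<longleftrightarrow> (\<exists>L. \<forall>x\<in>J. \<forall>y\<in>J. \<bar>u0 x - u0 y\<bar> \<le> L * jdist x y)"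

definition jlip_const :: "('n jpt \<Rightarrow> real) \<Rightarrow> real" where
  "jlip_const u0 = Inf {L. 0 \<le> L \<and> (\<forall>x\<in>J. \<forall>y\<in>J. \<bar>u0 x - u0 y\<bar> \<le> L * jdist x y)}"

definition lsc_env :: "real \<Rightarrow> (real \<Rightarrow> 'n jpt \<Rightarrow> real) \<Rightarrow> real \<Rightarrow> 'n jpt \<Rightarrow> ereal" where
  "lsc_env T u t x = (SUP r\<in>{0<..}. INF sy\<in>{(s, y). 0 \<le> s \<and> s < T \<and> y \<in> J \<and>
       \<bar>s - t\<bar> < r \<and> jdist x y < r}. ereal (u (fst sy) (snd sy)))"

definition jcont :: "real \<Rightarrow> (real \<Rightarrow> 'n jpt \<Rightarrow> real) \<Rightarrow> bool" where
  "jcont T phi \<longleftrightarrow> (\<forall>t x e. 0 < t \<and> t < T \<and> x \<in> J \<and> 0 < e \<longrightarrow>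
     (\<exists>\<delta>>0. \<forall>s y. 0 < s \<and> s < T \<and> y \<in> J \<and> \<bar>s - t\<bar> < \<delta> \<and> jdist x y < \<delta> \<longrightarrow>
        \<bar>phi s y - phi t x\<bar> < e))"

definition c1_branch :: "real \<Rightarrow> (real \<Rightarrow> 'n jpt \<Rightarrow> real) \<Rightarrow> 'n \<Rightarrow>
    (real \<Rightarrow> real \<Rightarrow> real) \<Rightarrow> (real \<Rightarrow> real \<Rightarrow> real) \<Rightarrow> bool" where
  "c1_branch T phi a phit phix \<longleftrightarrow>
     continuous_on ({0<..<T} \<times> {0..}) (\<lambda>(t, x). phit t x)
   \<and> continuous_on ({0<..<T} \<times> {0..}) (\<lambda>(t, x). phix t x)
   \<and> (\<forall>t x. 0 < t \<and> t < T \<and> 0 \<le> x \<longrightarrow>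
        ((\<lambda>(s, y). phi s (pt a y)) has_derivative (\<lambda>(h, k). h * phit t x + k * phix t x))
          (at (t, x) within {0<..<T} \<times> {0..}))"

definition visc_super :: "real \<Rightarrow> ('n::finite \<Rightarrow> real \<Rightarrow> real) \<Rightarrow> (real ^ 'n \<Rightarrow> real) \<Rightarrow>
    ('n jpt \<Rightarrow> real) \<Rightarrow> (real \<Rightarrow> 'n jpt \<Rightarrow> real) \<Rightarrow> bool" where
  "visc_super T H F u0 u \<longleftrightarrow>
     (\<forall>phi phit phix t0 x0.
        0 < t0 \<and> t0 < T \<and> x0 \<in> J \<and> jcont T phi
        \<and> (\<forall>a. c1_branch T phi a (phit a) (phix a))
        \<and> (\<exists>r>0. \<forall>s y. 0 < s \<and> s < T \<and> y \<in> J \<and> \<bar>s - t0\<bar> < r \<and> jdist y x0 < r \<longrightarrow>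
               ereal (phi s y) \<le> lsc_env T u s y)
        \<and> lsc_env T u t0 x0 = ereal (phi t0 x0)
        \<longrightarrow> (case x0 of
               Jo \<Rightarrow> (\<forall>a. phit a t0 0 + F (\<chi> b. phix b t0 0) \<ge> 0)
             | Br a x \<Rightarrow> phit a t0 x + H a (phix a t0 x) \<ge> 0))
   \<and> (\<forall>x\<in>J. ereal (u0 x) \<le> lsc_env T u 0 x)"

definition scheme :: "('n::finite \<Rightarrow> real \<Rightarrow> real) \<Rightarrow> ('n \<Rightarrow> real) \<Rightarrow> real \<Rightarrow>
    ('n jpt \<Rightarrow> real) \<Rightarrow> real \<Rightarrow> real \<Rightarrow> (nat \<Rightarrow> 'n \<Rightarrow> nat \<Rightarrow> real) \<Rightarrow> bool" where
  "scheme H p0 A u0 dt dx U \<longleftrightarrow>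
     (\<forall>n a b. U n a 0 = U n b 0)
   \<and> (\<forall>n a i. 1 \<le> i \<longrightarrow>
        (U (Suc n) a i - U n a i) / dt
        + max (Hplus H p0 a ((U n a i - U n a (i - 1)) / dx))
              (Hminus H p0 a ((U n a (i + 1) - U n a i) / dx)) = 0)
   \<and> (\<forall>n a. (U (Suc n) a 0 - U n a 0) / dt
        + FA H p0 A (\<chi> b. (U n b 1 - U n b 0) / dx) = 0)
   \<and> (\<forall>a i. U 0 a i = u0 (pt a (real i * dx)))"

text \<open>Bound on the discrete time derivative, and the gradient bounds derived from it.\<close>
definition C0 :: "('n::finite \<Rightarrow> real \<Rightarrow> real) \<Rightarrow> real \<Rightarrow> ('n jpt \<Rightarrow> real) \<Rightarrow> real" where
  "C0 H A u0 = max \<bar>A\<bar> (Max (range (\<lambda>a. Sup ((\<lambda>p. \<bar>H a p\<bar>) ` {- jlip_const u0 .. jlip_const u0}))))"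

definition p_up :: "('n::finite \<Rightarrow> real \<Rightarrow> real) \<Rightarrow> real \<Rightarrow> ('n jpt \<Rightarrow> real) \<Rightarrow> 'n \<Rightarrow> real" where
  "p_up H A u0 a = Sup {p. H a p \<le> C0 H A u0}"

definition p_lo :: "('n::finite \<Rightarrow> real \<Rightarrow> real) \<Rightarrow> real \<Rightarrow> ('n jpt \<Rightarrow> real) \<Rightarrow> 'n \<Rightarrow> real" where
  "p_lo H A u0 a = Inf {p. H a p \<le> C0 H A u0}"

definition p_lo0 :: "('n::finite \<Rightarrow> real \<Rightarrow> real) \<Rightarrow> real \<Rightarrow> ('n jpt \<Rightarrow> real) \<Rightarrow> 'n \<Rightarrow> real" where
  "p_lo0 H A u0 a = p_lo H A u0 a"

definition CFLr :: "('n::finite \<Rightarrow> real \<Rightarrow> real) \<Rightarrow> ('n \<Rightarrow> real) \<Rightarrow> real \<Rightarrow>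
    ('n jpt \<Rightarrow> real) \<Rightarrow> real \<Rightarrow> real \<Rightarrow> bool" where
  "CFLr H p0 A u0 dt dx \<longleftrightarrow>
     (\<forall>a p D. p_lo H A u0 a \<le> p \<and> p \<le> p_up H A u0 a \<and> (H a has_real_derivative D) (at p)
        \<longrightarrow> \<bar>D\<bar> \<le> dx / dt)
   \<and> (\<forall>p D. (\<forall>a. p_lo0 H A u0 a \<le> p $ a \<and> p $ a \<le> p_up H A u0 a)
        \<and> (FA H p0 A has_derivative D) (at p)
        \<longrightarrow> - D (\<chi> b. 1) \<le> dx / dt)"

end

theory Submission
  imports Defs
begin

text \<open>
  Neither half of the estimate uses the CFL condition. Since F_A \<ge> A and
  H_\<alpha>^+ \<ge> min H_\<alpha>, every time step raises the discrete solution by at most dt times a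
  fixed constant, so U^n \<le> u_0 + T K'. For u, let M exceed the Lipschitz constant of u_0 and
  the linear growth rate of u, and let K exceed A and H_\<alpha> on [-M, M]. Then
  \<phi>(s, y) = u_0(y_0) - M sqrt(1 + d(y_0, y)^2) - K s - \<eta> / (T - s) is a strict classical
  subsolution lying below u_0 at s = 0 and below u near infinity and near s = T, so the gap
  between the lower envelope of u and \<phi> attains its minimum; if that minimum were negative,
  \<phi> shifted by it would touch the envelope from below at a positive time, against the
  super-solution inequalities. Letting \<eta> \<rightarrow> 0 with y_0 = y gives u(s, y) \<ge> u_0(y) - M - K s,
  and the Lipschitz bound on u_0 joins the two estimates.
\<close>

lemma jabs_nonneg: "x \<in> J \<Longrightarrow> 0 \<le> jabs x"
  by (auto simp: J_def)

lemma jdist_sym: "jdist x y = jdist y x"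
  unfolding jdist_def by auto

lemma jdist_self [simp]: "jdist x x = 0"
  unfolding jdist_def by auto

lemma jdist_nonneg: "x \<in> J \<Longrightarrow> y \<in> J \<Longrightarrow> 0 \<le> jdist x y"
  unfolding jdist_def by (auto simp: J_def)

lemma jabs_diff_le_jdist: "x \<in> J \<Longrightarrow> y \<in> J \<Longrightarrow> \<bar>jabs x - jabs y\<bar> \<le> jdist x y"
  unfolding jdist_def by (auto simp: J_def)

lemma jdist_triangle: "x \<in> J \<Longrightarrow> y \<in> J \<Longrightarrow> z \<in> J \<Longrightarrow> jdist x z \<le> jdist x y + jdist y z"
  unfolding jdist_def J_def by (cases x; cases y; cases z) (auto split: if_splits)

lemma jdist_Jo: "y \<in> J \<Longrightarrow> jdist Jo y = jabs y"
  by (auto simp: jdist_def J_def)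

lemma pt_in_J: "0 \<le> x \<Longrightarrow> pt a x \<in> J"
  by (auto simp: pt_def J_def)

lemma jdist_pt_pt: "0 \<le> x \<Longrightarrow> 0 \<le> z \<Longrightarrow> jdist (pt a x) (pt a z) = \<bar>x - z\<bar>"
  unfolding jdist_def pt_def by auto

lemma J_eq_pt: "y \<in> J \<Longrightarrow> \<exists>b. y = pt b (jabs y)"
  by (auto simp: J_def pt_def)

definition jcoord :: "'n jpt \<Rightarrow> 'n \<Rightarrow> real" where
  "jcoord y a = (if jbranch y = Some a then jabs y else - jabs y)"

lemma jdist_pt_jcoord:
  assumes "y \<in> J" "0 \<le> z"
  shows "jdist y (pt a z) = \<bar>z - jcoord y a\<bar>"
  using assms by (cases y) (auto simp: J_def jdist_def pt_def jcoord_def)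

definition cyl_nbhd :: "real \<Rightarrow> real \<Rightarrow> 'n jpt \<Rightarrow> real \<Rightarrow> (real \<times> 'n jpt) set" where
  "cyl_nbhd T t x r = {(s, y). 0 \<le> s \<and> s < T \<and> y \<in> J \<and> \<bar>s - t\<bar> < r \<and> jdist x y < r}"

lemma lsc_env_cyl_nbhd:
  "lsc_env T u t x = (SUP r\<in>{0<..}. INF sy\<in>cyl_nbhd T t x r. ereal (u (fst sy) (snd sy)))"
  unfolding lsc_env_def cyl_nbhd_def by simp

lemma lsc_env_le:
  assumes "0 \<le> t" "t < T" "x \<in> J"
  shows "lsc_env T u t x \<le> ereal (u t x)"
  unfolding lsc_env_cyl_nbhd
proof (rule SUP_least)
  fix r :: real assume "r \<in> {0<..}"
  then have "(t, x) \<in> cyl_nbhd T t x r" using assms by (auto simp: cyl_nbhd_def)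
  then show "(INF sy\<in>cyl_nbhd T t x r. ereal (u (fst sy) (snd sy))) \<le> ereal (u t x)"
    by (metis (no_types, lifting) INF_lower fst_conv snd_conv)
qed

lemma lsc_env_ge:
  assumes "0 < r" "\<And>s y. (s, y) \<in> cyl_nbhd T t x r \<Longrightarrow> c \<le> u s y"
  shows "ereal c \<le> lsc_env T u t x"
  unfolding lsc_env_cyl_nbhd
proof (rule SUP_upper2)
  show "ereal c \<le> (INF sy\<in>cyl_nbhd T t x r. ereal (u (fst sy) (snd sy)))"
    by (rule INF_greatest) (use assms in auto)
qed (use assms in simp)

lemma lsc_env_lower_semicontinuous:
  assumes "ereal c < lsc_env T u t x" "x \<in> J"
  shows "\<exists>r>0. \<forall>s y. (s, y) \<in> cyl_nbhd T t x r \<longrightarrow> ereal c < lsc_env T u s y"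
proof -
  from assms(1) obtain r where r: "r > 0"
    "ereal c < (INF sy\<in>cyl_nbhd T t x r. ereal (u (fst sy) (snd sy)))"
    unfolding lsc_env_cyl_nbhd less_SUP_iff by auto
  have "ereal c < lsc_env T u s y" if sy: "(s, y) \<in> cyl_nbhd T t x (r/2)" for s y
  proof -
    have "cyl_nbhd T s y (r/2) \<subseteq> cyl_nbhd T t x r"
    proof (clarify)
      fix s' y' assume p: "(s', y') \<in> cyl_nbhd T s y (r/2)"
      have "jdist x y' \<le> jdist x y + jdist y y'"
        using p sy assms(2) by (intro jdist_triangle) (auto simp: cyl_nbhd_def)
      moreover have "\<bar>s' - t\<bar> \<le> \<bar>s' - s\<bar> + \<bar>s - t\<bar>" by arith
      ultimately show "(s', y') \<in> cyl_nbhd T t x r"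
        using p sy unfolding cyl_nbhd_def by auto
    qed
    then have "(INF sy\<in>cyl_nbhd T t x r. ereal (u (fst sy) (snd sy)))
        \<le> (INF sy\<in>cyl_nbhd T s y (r/2). ereal (u (fst sy) (snd sy)))"
      by (rule INF_superset_mono) simp
    also have "\<dots> \<le> lsc_env T u s y"
      unfolding lsc_env_cyl_nbhd by (rule SUP_upper) (use r in auto)
    finally show ?thesis using r by simp
  qed
  then show ?thesis using r by (intro exI[of _ "r/2"]) auto
qed

lemma lsc_env_ge_linear:
  assumes lb: "\<And>s y. 0 \<le> s \<Longrightarrow> s < T \<Longrightarrow> y \<in> J \<Longrightarrow> - B * (1 + jabs y) \<le> u s y"
    and "0 \<le> B" "y \<in> J"
  shows "ereal (- B * (2 + jabs y)) \<le> lsc_env T u s y"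
proof (rule lsc_env_ge[of 1])
  fix s' y' assume "(s', y') \<in> cyl_nbhd T s y 1"
  then have h: "0 \<le> s'" "s' < T" "y' \<in> J" "jdist y y' < 1" by (auto simp: cyl_nbhd_def)
  have "jabs y' \<le> jabs y + 1" using jabs_diff_le_jdist[OF \<open>y \<in> J\<close> h(3)] h(4) by linarith
  then have "B * (1 + jabs y') \<le> B * (2 + jabs y)" using \<open>0 \<le> B\<close> by (intro mult_left_mono) auto
  then show "- B * (2 + jabs y) \<le> u s' y'" using lb[OF h(1-3)] by linarith
qed simp

lemma lsc_env_real:
  assumes "-\<infinity> < lsc_env T u t x" "0 \<le> t" "t < T" "x \<in> J"
  shows "lsc_env T u t x = ereal (real_of_ereal (lsc_env T u t x))"
    and "real_of_ereal (lsc_env T u t x) \<le> u t x"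
  using assms lsc_env_le[OF assms(2-4), of u] by (cases "lsc_env T u t x"; simp)+

lemma visc_super_initial_le:
  assumes "visc_super T H F u0 u" "0 < T" "x \<in> J"
  shows "u0 x \<le> u 0 x"
proof -
  have "ereal (u0 x) \<le> lsc_env T u 0 x" using assms unfolding visc_super_def by blast
  also have "\<dots> \<le> ereal (u 0 x)" using lsc_env_le[of 0 T x u] assms(2,3) by simp
  finally show ?thesis by simp
qed

lemma lsc_attains_min:
  fixes f :: "'a::metric_space \<Rightarrow> real"
  assumes K: "compact K" "K \<noteq> {}"
    and lsc: "\<And>p c. p \<in> K \<Longrightarrow> c < f p \<Longrightarrow> \<exists>r>0. \<forall>q\<in>K. dist q p < r \<longrightarrow> c < f q"
  shows "\<exists>p\<in>K. \<forall>q\<in>K. f p \<le> f q"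
proof (rule ccontr)
  assume "\<not> ?thesis"
  then obtain g where g: "\<And>p. p \<in> K \<Longrightarrow> g p \<in> K \<and> f (g p) < f p"
    by (metis not_le)
  have "\<forall>p\<in>K. \<exists>r>0. \<forall>q\<in>K. dist q p < r \<longrightarrow> f (g p) < f q"
    using lsc g by blast
  then obtain rr where rr: "\<And>p. p \<in> K \<Longrightarrow> rr p > 0 \<and> (\<forall>q\<in>K. dist q p < rr p \<longrightarrow> f (g p) < f q)"
    by metis
  have "K \<subseteq> (\<Union>p\<in>K. ball p (rr p))"
    using rr centre_in_ball by blast
  then obtain F where F: "F \<subseteq> K" "finite F" "K \<subseteq> (\<Union>p\<in>F. ball p (rr p))"
    using compactE_image[OF K(1), of K "\<lambda>p. ball p (rr p)"] by auto
  then have "F \<noteq> {}" using K(2) by auto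
  then obtain p0 where p0: "p0 \<in> F" "\<forall>p\<in>F. f (g p0) \<le> f (g p)"
    using arg_min_if_finite[OF F(2), of "\<lambda>p. f (g p)"] by (meson not_le)
  have "g p0 \<in> K" using g p0 F by auto
  then obtain p1 where p1: "p1 \<in> F" "g p0 \<in> ball p1 (rr p1)" using F by auto
  then have "f (g p1) < f (g p0)" using rr[of p1] F \<open>g p0 \<in> K\<close> by (auto simp: dist_commute)
  then show False using p0 p1 by fastforce
qed

lemma lsc_family_attains_min:
  fixes f :: "'i::finite \<Rightarrow> 'a::metric_space \<Rightarrow> real"
  assumes "compact K" "K \<noteq> {}"
    and lsc: "\<And>i p c. p \<in> K \<Longrightarrow> c < f i p \<Longrightarrow> \<exists>r>0. \<forall>q\<in>K. dist q p < r \<longrightarrow> c < f i q"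
  shows "\<exists>i. \<exists>p\<in>K. \<forall>j. \<forall>q\<in>K. f i p \<le> f j q"
proof -
  obtain pm where pm: "\<And>i. pm i \<in> K \<and> (\<forall>q\<in>K. f i (pm i) \<le> f i q)"
    using lsc_attains_min[OF assms(1,2) lsc] by metis
  define i where "i = arg_min_on (\<lambda>i. f i (pm i)) UNIV"
  have "\<forall>j. f i (pm i) \<le> f j (pm j)"
    using arg_min_if_finite(2)[of UNIV "\<lambda>i. f i (pm i)"] by (auto simp: i_def not_less)
  then show ?thesis using pm by (meson order_trans)
qed

definition jcont0 :: "real \<Rightarrow> (real \<Rightarrow> 'n jpt \<Rightarrow> real) \<Rightarrow> bool" where
  "jcont0 T phi \<longleftrightarrow> (\<forall>t x e. 0 \<le> t \<and> t < T \<and> x \<in> J \<and> 0 < e \<longrightarrow>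
     (\<exists>\<delta>>0. \<forall>s y. 0 \<le> s \<and> s < T \<and> y \<in> J \<and> \<bar>s - t\<bar> < \<delta> \<and> jdist x y < \<delta> \<longrightarrow>
        \<bar>phi s y - phi t x\<bar> < e))"

lemma jcont0_imp_jcont:
  fixes phi :: "real \<Rightarrow> 'n jpt \<Rightarrow> real"
  assumes "jcont0 T phi"
  shows "jcont T phi"
  unfolding jcont_def
proof (intro allI impI)
  fix t e :: real and x :: "'n jpt" assume "0 < t \<and> t < T \<and> x \<in> J \<and> 0 < e"
  then obtain \<delta> where "\<delta> > 0" "\<forall>s y. 0 \<le> s \<and> s < T \<and> y \<in> J \<and> \<bar>s - t\<bar> < \<delta> \<and> jdist x y < \<delta> \<longrightarrow>
      \<bar>phi s y - phi t x\<bar> < e"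
    using assms[unfolded jcont0_def, rule_format, of t x e] by auto
  then show "\<exists>\<delta>>0. \<forall>s y. 0 < s \<and> s < T \<and> y \<in> J \<and> \<bar>s - t\<bar> < \<delta> \<and> jdist x y < \<delta> \<longrightarrow>
      \<bar>phi s y - phi t x\<bar> < e"
    by (meson less_imp_le)
qed

lemma jcont_add_const: "jcont T phi \<Longrightarrow> jcont T (\<lambda>s y. phi s y + c)"
  unfolding jcont_def by simp

lemma c1_branch_add_const:
  "c1_branch T phi a phit phix \<Longrightarrow> c1_branch T (\<lambda>s y. phi s y + c) a phit phix"
  unfolding c1_branch_def case_prod_beta' by (simp add: has_derivative_add_const)

lemma jcont0_time_plus_space:
  fixes h :: "'n jpt \<Rightarrow> real"
  assumes g: "\<And>t. 0 \<le> t \<Longrightarrow> t < T \<Longrightarrow> isCont g t"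
    and h: "\<And>x y. x \<in> J \<Longrightarrow> y \<in> J \<Longrightarrow> \<bar>h y - h x\<bar> \<le> L * jdist x y"
  shows "jcont0 T (\<lambda>s y. g s + h y)"
  unfolding jcont0_def
proof (intro allI impI)
  fix t e :: real and x :: "'n jpt" assume tx: "0 \<le> t \<and> t < T \<and> x \<in> J \<and> 0 < e"
  then have "g \<midarrow>t\<rightarrow> g t" using g isCont_def by blast
  from LIM_D[OF this, of "e/2"] tx obtain d1 where d1: "d1 > 0"
    "\<And>s. s \<noteq> t \<and> norm (s - t) < d1 \<Longrightarrow> norm (g s - g t) < e/2" by auto
  define d2 where "d2 = e / (2 * (\<bar>L\<bar> + 1))"
  have d2: "d2 > 0" "\<bar>L\<bar> * d2 < e / 2"
    using tx by (auto simp: d2_def field_simps)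
  show "\<exists>\<delta>>0. \<forall>s y. 0 \<le> s \<and> s < T \<and> y \<in> J \<and> \<bar>s - t\<bar> < \<delta> \<and> jdist x y < \<delta> \<longrightarrow>
          \<bar>g s + h y - (g t + h x)\<bar> < e"
  proof (intro exI[of _ "min d1 d2"] conjI allI impI)
    fix s y assume sy: "0 \<le> s \<and> s < T \<and> y \<in> J \<and> \<bar>s - t\<bar> < min d1 d2 \<and> jdist x y < min d1 d2"
    have "\<bar>g s - g t\<bar> < e/2"
      using d1(2)[of s] sy tx by (cases "s = t") auto
    moreover have "\<bar>h y - h x\<bar> \<le> \<bar>L\<bar> * jdist x y"
      using h[of x y] mult_right_mono[OF abs_ge_self jdist_nonneg[of x y], of L] sy tx by fastforce
    moreover have "\<bar>L\<bar> * jdist x y \<le> \<bar>L\<bar> * d2"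
      using sy by (intro mult_left_mono) auto
    ultimately show "\<bar>g s + h y - (g t + h x)\<bar> < e" using d2 by linarith
  qed (use d1 d2 in simp)
qed

lemma sqrt_one_plus_square_lipschitz: "\<bar>sqrt (1 + a\<^sup>2) - sqrt (1 + b\<^sup>2)\<bar> \<le> \<bar>a - b\<bar>"
proof -
  have "\<bar>norm (1::real, a) - norm (1::real, b)\<bar> \<le> norm ((1::real, a) - (1, b))"
    by (rule norm_triangle_ineq3)
  then show ?thesis by (simp add: norm_Pair)
qed

lemma abs_le_sqrt_one_plus_square: "\<bar>a\<bar> \<le> sqrt (1 + a\<^sup>2)"
  by (rule real_le_rsqrt) simp

section \<open>Comparison with strict classical subsolutions\<close>

lemma lsc_env_minus_jcont0_lsc_on_branch:
  assumes fin: "\<And>s y. 0 \<le> s \<Longrightarrow> s < T \<Longrightarrow> y \<in> J \<Longrightarrow> -\<infinity> < lsc_env T u s y"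
    and cont: "jcont0 T \<phi>"
    and tz: "0 \<le> t" "t < T" "0 \<le> z"
    and c: "c < real_of_ereal (lsc_env T u t (pt a z)) - \<phi> t (pt a z)"
  shows "\<exists>r>0. \<forall>s z'. 0 \<le> s \<and> s < T \<and> 0 \<le> z' \<and> dist (s, z') (t, z) < r \<longrightarrow>
           c < real_of_ereal (lsc_env T u s (pt a z')) - \<phi> s (pt a z')"
proof -
  define x where "x = pt a z"
  have x: "x \<in> J" using tz by (simp add: x_def pt_in_J)
  define e where "e = (real_of_ereal (lsc_env T u t x) - \<phi> t x - c) / 2"
  have e: "0 < e" using c by (simp add: e_def x_def)
  have "ereal (c + \<phi> t x + e) < lsc_env T u t x"
    using c by (subst lsc_env_real(1)[OF fin[OF tz(1,2) x] tz(1,2) x]) (simp add: e_def x_def field_simps)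
  from lsc_env_lower_semicontinuous[OF this x] obtain r1 where r1: "r1 > 0"
    "\<And>s y. (s, y) \<in> cyl_nbhd T t x r1 \<Longrightarrow> ereal (c + \<phi> t x + e) < lsc_env T u s y" by blast
  obtain r2 where r2: "r2 > 0"
    "\<And>s y. 0 \<le> s \<and> s < T \<and> y \<in> J \<and> \<bar>s - t\<bar> < r2 \<and> jdist x y < r2 \<Longrightarrow> \<bar>\<phi> s y - \<phi> t x\<bar> < e"
    using cont tz x e unfolding jcont0_def by meson
  show ?thesis
  proof (intro exI[of _ "min r1 r2"] conjI allI impI)
    fix s z' assume h: "0 \<le> s \<and> s < T \<and> 0 \<le> z' \<and> dist (s, z') (t, z) < min r1 r2"
    define y where "y = pt a z'"
    have y: "y \<in> J" using h by (simp add: y_def pt_in_J)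
    have "\<bar>s - t\<bar> < min r1 r2" "jdist x y < min r1 r2"
      using h dist_fst_le[of "(s, z')" "(t, z)"] dist_snd_le[of "(s, z')" "(t, z)"] tz
      by (auto simp: dist_real_def x_def y_def jdist_pt_pt abs_minus_commute)
    then have "ereal (c + \<phi> t x + e) < lsc_env T u s y" and "\<bar>\<phi> s y - \<phi> t x\<bar> < e"
      using r1(2)[of s y] r2(2)[of s y] h y by (auto simp: cyl_nbhd_def)
    moreover have "lsc_env T u s y = ereal (real_of_ereal (lsc_env T u s y))"
      using lsc_env_real(1) fin h y by blast
    ultimately have "c + \<phi> t x + e < real_of_ereal (lsc_env T u s y)" and "\<bar>\<phi> s y - \<phi> t x\<bar> < e"
      by (metis less_ereal.simps(1))+
    then show "c < real_of_ereal (lsc_env T u s (pt a z')) - \<phi> s (pt a z')"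
      by (simp add: y_def abs_less_iff)
  qed (use r1 r2 in simp)
qed

lemma lsc_env_minus_attains_min:
  fixes T :: real and u \<phi> :: "real \<Rightarrow> 'n::finite jpt \<Rightarrow> real"
  defines "\<psi> s y \<equiv> real_of_ereal (lsc_env T u s y) - \<phi> s y"
  assumes fin: "\<And>s y. 0 \<le> s \<Longrightarrow> s < T \<Longrightarrow> y \<in> J \<Longrightarrow> -\<infinity> < lsc_env T u s y"
    and cont: "jcont0 T \<phi>"
    and confined: "T' < T"
      "\<And>s y. 0 \<le> s \<Longrightarrow> s < T \<Longrightarrow> y \<in> J \<Longrightarrow> \<psi> s y < 0 \<Longrightarrow> s \<le> T' \<and> jabs y \<le> R"
    and neg: "0 \<le> s1" "s1 < T" "y1 \<in> J" "\<psi> s1 y1 < 0"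
  shows "\<exists>t0 x0. 0 \<le> t0 \<and> t0 < T \<and> x0 \<in> J \<and> \<psi> t0 x0 < 0 \<and>
           (\<forall>s y. 0 \<le> s \<and> s < T \<and> y \<in> J \<longrightarrow> \<psi> t0 x0 \<le> \<psi> s y)"
proof -
  define Rect where "Rect = {0..T'} \<times> {0..R}"
  have in_Rect: "(s, jabs y) \<in> Rect" if "0 \<le> s" "s < T" "y \<in> J" "\<psi> s y < 0" for s y
    using confined(2)[OF that] that(1) jabs_nonneg[OF that(3)] by (simp add: Rect_def)
  have Rect_sub: "0 \<le> s \<and> s < T \<and> 0 \<le> z" if "(s, z) \<in> Rect" for s z
    using that confined(1) by (auto simp: Rect_def)
  have "compact Rect" "Rect \<noteq> {}"
    using in_Rect[OF neg] by (auto simp: Rect_def intro!: compact_Times)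
  then have "\<exists>a0. \<exists>p0\<in>Rect. \<forall>b. \<forall>q\<in>Rect. \<psi> (fst p0) (pt a0 (snd p0)) \<le> \<psi> (fst q) (pt b (snd q))"
  proof (rule lsc_family_attains_min)
    fix a p c assume p: "p \<in> Rect" "c < \<psi> (fst p) (pt a (snd p))"
    obtain r where "r > 0" and r: "\<And>s z'. 0 \<le> s \<and> s < T \<and> 0 \<le> z' \<and> dist (s, z') p < r \<Longrightarrow>
        c < \<psi> s (pt a z')"
      using lsc_env_minus_jcont0_lsc_on_branch[OF fin cont, of "fst p" "snd p" c a]
        Rect_sub[of "fst p" "snd p"] p unfolding \<psi>_def by auto
    show "\<exists>r>0. \<forall>q\<in>Rect. dist q p < r \<longrightarrow> c < \<psi> (fst q) (pt a (snd q))"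
    proof (intro exI[of _ r] conjI ballI impI)
      fix q assume "q \<in> Rect" "dist q p < r"
      then show "c < \<psi> (fst q) (pt a (snd q))" using r[of "fst q" "snd q"] Rect_sub[of "fst q" "snd q"] by simp
    qed fact
  qed
  then obtain a0 p0 where p0: "p0 \<in> Rect" and
    min: "\<And>b q. q \<in> Rect \<Longrightarrow> \<psi> (fst p0) (pt a0 (snd p0)) \<le> \<psi> (fst q) (pt b (snd q))"
    by blast
  define t0 x0 where "t0 = fst p0" and "x0 = pt a0 (snd p0)"
  have global: "\<psi> t0 x0 \<le> \<psi> s y" if "0 \<le> s" "s < T" "y \<in> J" "\<psi> s y < 0" for s y
    using min[OF in_Rect[OF that]] J_eq_pt[OF that(3)] unfolding t0_def x0_def by (metis fst_conv snd_conv)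
  show ?thesis
  proof (intro exI conjI allI impI)
    show "0 \<le> t0" "t0 < T" "x0 \<in> J"
      using Rect_sub[of "fst p0" "snd p0"] p0 by (auto simp: t0_def x0_def pt_in_J)
    show "\<psi> t0 x0 < 0" using global[OF neg] neg(4) by simp
    then show "\<psi> t0 x0 \<le> \<psi> s y" if "0 \<le> s \<and> s < T \<and> y \<in> J" for s y
      using global[of s y] that by (cases "\<psi> s y < 0") auto
  qed
qed

lemma visc_super_touching:
  fixes phi :: "real \<Rightarrow> 'n::finite jpt \<Rightarrow> real"
  assumes visc: "visc_super T H F u0 u"
    and phi: "jcont T phi" "\<And>a. c1_branch T phi a (phit a) (phix a)"
    and t0: "0 < t0" "t0 < T" and x0: "x0 \<in> J"
    and below: "\<And>s y. 0 < s \<Longrightarrow> s < T \<Longrightarrow> y \<in> J \<Longrightarrow> ereal (phi s y) \<le> lsc_env T u s y"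
    and touch: "lsc_env T u t0 x0 = ereal (phi t0 x0)"
  shows "case x0 of Jo \<Rightarrow> (\<forall>a. phit a t0 0 + F (\<chi> b. phix b t0 0) \<ge> 0)
           | Br a x \<Rightarrow> phit a t0 x + H a (phix a t0 x) \<ge> 0"
proof -
  have "\<exists>r>0. \<forall>s y. 0 < s \<and> s < T \<and> y \<in> J \<and> \<bar>s - t0\<bar> < r \<and> jdist y x0 < r \<longrightarrow>
          ereal (phi s y) \<le> lsc_env T u s y"
    using below by (intro exI[of _ 1]) auto
  then show ?thesis
    using visc[unfolded visc_super_def, THEN conjunct1, THEN spec[of _ phi], THEN spec[of _ phit],
        THEN spec[of _ phix], THEN spec[of _ t0], THEN spec[of _ x0]] phi t0 x0 touch by blast
qed

lemma visc_super_ge_strict_subsolution: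
  fixes T :: real and u \<phi> :: "real \<Rightarrow> 'n::finite jpt \<Rightarrow> real"
  assumes visc: "visc_super T H F u0 u"
    and fin: "\<And>s y. 0 \<le> s \<Longrightarrow> s < T \<Longrightarrow> y \<in> J \<Longrightarrow> -\<infinity> < lsc_env T u s y"
    and cont: "jcont0 T \<phi>" and c1: "\<And>a. c1_branch T \<phi> a (\<phi>t a) (\<phi>x a)"
    and branch: "\<And>a t x. 0 < t \<Longrightarrow> t < T \<Longrightarrow> 0 < x \<Longrightarrow> \<phi>t a t x + H a (\<phi>x a t x) < 0"
    and junction: "\<And>a t. 0 < t \<Longrightarrow> t < T \<Longrightarrow> \<phi>t a t 0 + F (\<chi> b. \<phi>x b t 0) < 0"
    and init: "\<And>y. y \<in> J \<Longrightarrow> \<phi> 0 y \<le> u0 y"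
    and confined: "T' < T" "\<And>s y. 0 \<le> s \<Longrightarrow> s < T \<Longrightarrow> y \<in> J \<Longrightarrow>
      lsc_env T u s y < ereal (\<phi> s y) \<Longrightarrow> s \<le> T' \<and> jabs y \<le> R"
    and s: "0 \<le> s" "s < T" "y \<in> J"
  shows "\<phi> s y \<le> u s y"
proof (rule ccontr)
  define \<psi> where "\<psi> s y = real_of_ereal (lsc_env T u s y) - \<phi> s y" for s y
  have V: "lsc_env T u s y = ereal (\<psi> s y + \<phi> s y)" "\<psi> s y + \<phi> s y \<le> u s y"
    if "0 \<le> s" "s < T" "y \<in> J" for s y
    using lsc_env_real[OF fin[OF that] that] by (simp_all add: \<psi>_def)
  assume "\<not> \<phi> s y \<le> u s y"
  then have "\<psi> s y < 0" using V(2)[OF s] by simp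
  moreover have "s \<le> T' \<and> jabs y \<le> R" if "0 \<le> s" "s < T" "y \<in> J" "\<psi> s y < 0" for s y
    using confined(2)[OF that(1-3)] V(1)[OF that(1-3)] that(4) by simp
  ultimately obtain t0 x0 where x0: "0 \<le> t0" "t0 < T" "x0 \<in> J" "\<psi> t0 x0 < 0"
    and min: "\<And>s y. 0 \<le> s \<Longrightarrow> s < T \<Longrightarrow> y \<in> J \<Longrightarrow> \<psi> t0 x0 \<le> \<psi> s y"
    using lsc_env_minus_attains_min[OF fin cont confined(1), of R s y] s unfolding \<psi>_def by blast
  have "0 < t0"
  proof (rule ccontr)
    assume "\<not> 0 < t0"
    then have "t0 = 0" using x0 by simp
    have "ereal (u0 x0) \<le> lsc_env T u 0 x0" using visc x0(3) unfolding visc_super_def by blast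
    then show False using V(1)[of 0 x0] init[of x0] x0 \<open>t0 = 0\<close> by simp
  qed
  text \<open>Shifting \<phi> by the negative minimum of the gap makes it touch the envelope from below.\<close>
  define m where "m = \<psi> t0 x0"
  have touch: "case x0 of Jo \<Rightarrow> (\<forall>a. \<phi>t a t0 0 + F (\<chi> b. \<phi>x b t0 0) \<ge> 0)
          | Br a x \<Rightarrow> \<phi>t a t0 x + H a (\<phi>x a t0 x) \<ge> 0"
  proof (rule visc_super_touching[OF visc jcont_add_const[OF jcont0_imp_jcont[OF cont]]
        c1_branch_add_const[OF c1] \<open>0 < t0\<close> x0(2,3)])
    show "ereal (\<phi> s y + m) \<le> lsc_env T u s y" if "0 < s" "s < T" "y \<in> J" for s y
      using min[of s y] V(1)[of s y] that by (simp add: m_def)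
    show "lsc_env T u t0 x0 = ereal (\<phi> t0 x0 + m)"
      using V(1)[of t0 x0] x0 by (simp add: m_def add.commute)
  qed
  show False
  proof (cases x0)
    case Jo
    then have "0 \<le> \<phi>t a t0 0 + F (\<chi> b. \<phi>x b t0 0)" for a using touch by simp
    then show False using junction[OF \<open>0 < t0\<close> x0(2), of undefined] by (meson not_le)
  next
    case (Br a x)
    then have "0 < x" using x0(3) by (simp add: J_def)
    then show False using touch Br branch[OF \<open>0 < t0\<close> x0(2) \<open>0 < x\<close>, of a] by simp
  qed
qed

definition cone_barrier :: "real \<Rightarrow> real \<Rightarrow> 'n jpt \<Rightarrow> real \<Rightarrow> real \<Rightarrow> real \<Rightarrow> real \<Rightarrow> 'n jpt \<Rightarrow> real" where
  "cone_barrier T c y0 M K \<eta> s y = c - M * sqrt (1 + (jdist y0 y)\<^sup>2) - K * s - \<eta> / (T - s)"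

lemma jcont0_cone_barrier:
  fixes y0 :: "'n jpt"
  assumes "y0 \<in> J" "0 \<le> M"
  shows "jcont0 T (cone_barrier T c y0 M K \<eta>)"
proof -
  have "jcont0 T (\<lambda>s y. (c - K * s - \<eta> / (T - s)) + - M * sqrt (1 + (jdist y0 y)\<^sup>2))"
  proof (rule jcont0_time_plus_space)
    show "isCont (\<lambda>s. c - K * s - \<eta> / (T - s)) t" if "t < T" for t
      using that by (auto intro!: continuous_intros)
    fix x y :: "'n jpt" assume "x \<in> J" "y \<in> J"
    then have "\<bar>jdist y0 y - jdist y0 x\<bar> \<le> jdist x y"
      using jdist_triangle[OF \<open>y0 \<in> J\<close>, of x y] jdist_triangle[OF \<open>y0 \<in> J\<close>, of y x] jdist_sym[of x y]
      by auto
    then have "\<bar>sqrt (1 + (jdist y0 y)\<^sup>2) - sqrt (1 + (jdist y0 x)\<^sup>2)\<bar> \<le> jdist x y"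
      using sqrt_one_plus_square_lipschitz order_trans by blast
    then show "\<bar>- M * sqrt (1 + (jdist y0 y)\<^sup>2) - - M * sqrt (1 + (jdist y0 x)\<^sup>2)\<bar> \<le> M * jdist x y"
      using assms(2) by (simp add: abs_mult mult_left_mono flip: right_diff_distrib)
  qed
  moreover have "cone_barrier T c y0 M K \<eta> = (\<lambda>s y. (c - K * s - \<eta> / (T - s)) + - M * sqrt (1 + (jdist y0 y)\<^sup>2))"
    by (simp add: fun_eq_iff cone_barrier_def)
  ultimately show ?thesis by simp
qed

lemma has_derivative_cone_barrier_branch:
  assumes "t < T"
  shows "((\<lambda>(s, z). c - M * sqrt (1 + (z - d)\<^sup>2) - K * s - \<eta> / (T - s)) has_derivative
          (\<lambda>(h, k). h * (- K - \<eta> / (T - t)\<^sup>2) + k * (- M * (x - d) / sqrt (1 + (x - d)\<^sup>2)))) (at (t, x))"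
proof -
  have pos: "0 < 1 + (x - d)\<^sup>2" by (simp add: add_pos_nonneg)
  have "((\<lambda>p. c - M * sqrt (1 + (snd p - d)\<^sup>2) - K * fst p - \<eta> / (T - fst p)) has_derivative
          (\<lambda>p. fst p * (- K - \<eta> / (T - t)\<^sup>2) + snd p * (- M * (x - d) / sqrt (1 + (x - d)\<^sup>2)))) (at (t, x))"
    apply (rule has_derivative_eq_rhs)
     apply (rule derivative_intros has_derivative_fst[OF has_derivative_ident]
        has_derivative_snd[OF has_derivative_ident] | (simp add: add_pos_nonneg; fail))+
    using assms pos by (auto simp: fun_eq_iff field_simps power2_eq_square)
  then show ?thesis by (simp add: case_prod_beta')
qed

lemma c1_branch_cone_barrier:
  assumes "y0 \<in> J"
  shows "c1_branch T (cone_barrier T c y0 M K \<eta>) a (\<lambda>t x. - K - \<eta> / (T - t)\<^sup>2)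
           (\<lambda>t x. - M * (x - jcoord y0 a) / sqrt (1 + (x - jcoord y0 a)\<^sup>2))"
  unfolding c1_branch_def
proof (intro conjI allI impI)
  have nz: "1 + z\<^sup>2 \<noteq> 0" for z :: real by (simp add: add_nonneg_eq_0_iff)
  show "continuous_on ({0<..<T} \<times> {0..}) (\<lambda>(t, x). - K - \<eta> / (T - t)\<^sup>2)"
    unfolding case_prod_beta' by (auto intro!: continuous_intros)
  show "continuous_on ({0<..<T} \<times> {0..})
      (\<lambda>(t, x). - M * (x - jcoord y0 a) / sqrt (1 + (x - jcoord y0 a)\<^sup>2))"
    using nz unfolding case_prod_beta' by (auto intro!: continuous_intros)
  fix t x :: real assume tx: "0 < t \<and> t < T \<and> 0 \<le> x"
  show "((\<lambda>(s, z). cone_barrier T c y0 M K \<eta> s (pt a z)) has_derivative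
      (\<lambda>(h, k). h * (- K - \<eta> / (T - t)\<^sup>2) + k * (- M * (x - jcoord y0 a) / sqrt (1 + (x - jcoord y0 a)\<^sup>2))))
      (at (t, x) within {0<..<T} \<times> {0..})"
  proof (rule has_derivative_transform_within
      [OF has_derivative_at_withinI[OF has_derivative_cone_barrier_branch], of _ T 1])
    fix q :: "real \<times> real" assume "q \<in> {0<..<T} \<times> {0..}"
    then show "(\<lambda>(s, z). c - M * sqrt (1 + (z - jcoord y0 a)\<^sup>2) - K * s - \<eta> / (T - s)) q
        = (\<lambda>(s, z). cone_barrier T c y0 M K \<eta> s (pt a z)) q"
      using jdist_pt_jcoord[OF assms] by (auto simp: cone_barrier_def)
  qed (use tx in auto)
qed

lemma abs_cone_slope_le:
  assumes "0 \<le> M"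
  shows "\<bar>M * d / sqrt (1 + d\<^sup>2)\<bar> \<le> M"
proof -
  have "\<bar>d\<bar> / sqrt (1 + d\<^sup>2) \<le> 1"
    using abs_le_sqrt_one_plus_square[of d] by (simp add: divide_le_eq_1 add_pos_nonneg)
  then have "M * (\<bar>d\<bar> / sqrt (1 + d\<^sup>2)) \<le> M * 1" using assms by (rule mult_left_mono)
  then show ?thesis using assms by (simp add: abs_mult abs_divide)
qed

section \<open>Lower bound for the super-solution\<close>

lemma Hminus_le:
  assumes "\<And>p. H a (p0 a) \<le> H a p"
  shows "Hminus H p0 a p \<le> H a p"
  using assms[of p] by (cases "p \<le> p0 a") (auto simp: Hminus_def min_def)

lemma FA_less:
  assumes "A < K" "\<And>a. Hminus H p0 a (p $ a) < K"
  shows "FA H p0 A p < K"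
  using assms by (simp add: FA_def Max_less_iff)

lemma hyp_H_bounded:
  fixes H :: "'n::finite \<Rightarrow> real \<Rightarrow> real"
  assumes "hyp_H H p0"
  shows "\<exists>K. \<forall>a p. \<bar>p\<bar> \<le> M \<longrightarrow> H a p < K"
proof -
  obtain LH where LH: "\<And>a p q. \<bar>H a p - H a q\<bar> \<le> LH a * \<bar>p - q\<bar>"
    using assms unfolding hyp_H_def by metis
  define K where "K = 1 + (\<Sum>a\<in>UNIV. \<bar>H a 0\<bar> + \<bar>LH a\<bar> * \<bar>M\<bar>)"
  have "H a p < K" if "\<bar>p\<bar> \<le> M" for a p
  proof -
    have "H a p - H a 0 \<le> \<bar>LH a\<bar> * \<bar>p\<bar>"
      using LH[of a p 0] mult_right_mono[OF abs_ge_self abs_ge_zero, of "LH a" p] by simp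
    then have "H a p \<le> \<bar>H a 0\<bar> + \<bar>LH a\<bar> * \<bar>p\<bar>" by linarith
    also have "\<dots> \<le> \<bar>H a 0\<bar> + \<bar>LH a\<bar> * \<bar>M\<bar>"
      using that by (simp add: mult_left_mono)
    also have "\<dots> < K"
      unfolding K_def using member_le_sum[of a UNIV "\<lambda>a. \<bar>H a 0\<bar> + \<bar>LH a\<bar> * \<bar>M\<bar>"] by simp
    finally show ?thesis .
  qed
  then show ?thesis by blast
qed

lemma cone_barrier_confined:
  assumes "0 < \<eta>" "0 \<le> B" "B < M" "0 \<le> K" "y0 \<in> J"
  shows "\<exists>T'<T. \<exists>R. \<forall>s y. 0 \<le> s \<and> s < T \<and> y \<in> J \<and> - B * (2 + jabs y) < cone_barrier T c y0 M K \<eta> s y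
           \<longrightarrow> s \<le> T' \<and> jabs y \<le> R"
proof (intro exI conjI allI impI)
  define Q where "Q = \<bar>c\<bar> + M * jabs y0 + 2 * B + 1"
  have "0 \<le> M * jabs y0" using assms jabs_nonneg[OF assms(5)] by simp
  then have Q: "0 < Q" using assms unfolding Q_def by linarith
  show "T - \<eta> / Q < T" using assms(1) Q by simp
  fix s y assume h: "0 \<le> s \<and> s < T \<and> y \<in> J \<and> - B * (2 + jabs y) < cone_barrier T c y0 M K \<eta> s y"
  have "jabs y - jabs y0 \<le> sqrt (1 + (jdist y0 y)\<^sup>2)"
    using jabs_diff_le_jdist[OF assms(5), of y] abs_le_sqrt_one_plus_square[of "jdist y0 y"] h by linarith
  then have "M * (jabs y - jabs y0) \<le> M * sqrt (1 + (jdist y0 y)\<^sup>2)"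
    using assms by (intro mult_left_mono) auto
  moreover have "0 \<le> K * s" using assms h by simp
  ultimately have sum: "(M - B) * jabs y + \<eta> / (T - s) < Q"
    using h unfolding cone_barrier_def Q_def by (auto simp: algebra_simps)
  have "0 \<le> (M - B) * jabs y" "0 < \<eta> / (T - s)"
    using assms h jabs_nonneg[of y] by auto
  then have "\<eta> / (T - s) < Q" "(M - B) * jabs y < Q" using sum by linarith+
  then have "\<eta> / Q < T - s" "jabs y < Q / (M - B)"
    using h assms Q by (simp_all add: divide_less_eq pos_divide_less_eq[OF Q] pos_less_divide_eq mult.commute)
  then show "s \<le> T - \<eta> / Q" "jabs y \<le> Q / (M - B)" by simp_all
qed

lemma visc_super_ge_cone_barrier:
  fixes H :: "'n::finite \<Rightarrow> real \<Rightarrow> real" and u :: "real \<Rightarrow> 'n jpt \<Rightarrow> real"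
  assumes visc: "visc_super T H (FA H p0 A) u0 u"
    and pmin: "\<And>a p. H a (p0 a) \<le> H a p"
    and lip: "\<And>x y. x \<in> J \<Longrightarrow> y \<in> J \<Longrightarrow> u0 x - u0 y \<le> L * jdist x y"
    and lb: "\<And>s y. 0 \<le> s \<Longrightarrow> s < T \<Longrightarrow> y \<in> J \<Longrightarrow> - B * (1 + jabs y) \<le> u s y"
    and BLM: "0 \<le> B" "B < M" "L \<le> M"
    and HK: "\<And>a p. \<bar>p\<bar> \<le> M \<Longrightarrow> H a p < K" "A < K" "0 \<le> K"
    and y0: "y0 \<in> J" and \<eta>: "0 < \<eta>"
    and s: "0 \<le> s" "s < T" "y \<in> J"
  shows "cone_barrier T (u0 y0) y0 M K \<eta> s y \<le> u s y"
proof -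
  have M: "0 \<le> M" using BLM by simp
  have env: "ereal (- B * (2 + jabs y)) \<le> lsc_env T u s y" if "y \<in> J" for s y
    using lsc_env_ge_linear[OF lb \<open>0 \<le> B\<close> that] .
  obtain T' R where "T' < T" and confined: "\<And>s y. 0 \<le> s \<Longrightarrow> s < T \<Longrightarrow> y \<in> J \<Longrightarrow>
      - B * (2 + jabs y) < cone_barrier T (u0 y0) y0 M K \<eta> s y \<Longrightarrow> s \<le> T' \<and> jabs y \<le> R"
    using cone_barrier_confined[OF \<eta> BLM(1,2) HK(3) y0, of T "u0 y0"] by blast
  define \<phi>x where "\<phi>x a t x = - M * (x - jcoord y0 a) / sqrt (1 + (x - jcoord y0 a)\<^sup>2)"
    for a :: 'n and t x :: real
  have slope: "\<bar>\<phi>x a t x\<bar> \<le> M" for a t x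
    using abs_cone_slope_le[OF M, of "x - jcoord y0 a"] by (simp add: \<phi>x_def)
  have H_slope: "H a (\<phi>x b t x) < K" for a b t x
    using HK(1) slope by blast
  have c1: "c1_branch T (cone_barrier T (u0 y0) y0 M K \<eta>) a (\<lambda>t x. - K - \<eta> / (T - t)\<^sup>2) (\<phi>x a)" for a
    using c1_branch_cone_barrier[OF y0] by (simp add: \<phi>x_def[abs_def])
  have time: "- K - \<eta> / (T - t)\<^sup>2 < - K" if "t < T" for t
    using \<eta> that by simp
  show ?thesis
  proof (rule visc_super_ge_strict_subsolution[OF visc _ jcont0_cone_barrier[OF y0 M] c1 _ _ _ \<open>T' < T\<close> _ s])
    show "-\<infinity> < lsc_env T u s y" if "y \<in> J" for s y
      using env[OF that, of s] by (metis MInfty_neq_ereal(2) ereal_infty_less(2) order_less_le_trans)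
    show "- K - \<eta> / (T - t)\<^sup>2 + H a (\<phi>x a t x) < 0" if "0 < t" "t < T" for a t x
      using H_slope[of a a t x] time[OF that(2)] by linarith
    show "- K - \<eta> / (T - t)\<^sup>2 + FA H p0 A (\<chi> b. \<phi>x b t 0) < 0" if "0 < t" "t < T" for t
    proof -
      have "Hminus H p0 a (\<phi>x a t 0) < K" for a
        using Hminus_le[of H a p0, OF pmin] H_slope[of a a t 0] by (meson le_less_trans)
      then have "FA H p0 A (\<chi> b. \<phi>x b t 0) < K" by (intro FA_less[OF HK(2)]) simp
      then show ?thesis using time[OF that(2)] by linarith
    qed
    show "cone_barrier T (u0 y0) y0 M K \<eta> 0 y \<le> u0 y" if "y \<in> J" for y
    proof -
      have "L * jdist y0 y \<le> M * sqrt (1 + (jdist y0 y)\<^sup>2)"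
        using BLM M abs_le_sqrt_one_plus_square[of "jdist y0 y"] jdist_nonneg[OF y0 that]
        by (intro mult_mono) auto
      moreover have "0 < \<eta> / T" using \<eta> s by simp
      ultimately show ?thesis
        using lip[OF y0 that] by (simp add: cone_barrier_def)
    qed
    show "s \<le> T' \<and> jabs y \<le> R"
      if "0 \<le> s" "s < T" "y \<in> J" "lsc_env T u s y < ereal (cone_barrier T (u0 y0) y0 M K \<eta> s y)" for s y
      using confined[OF that(1-3)] order_le_less_trans[OF env[OF that(3), of s] that(4)] by simp
  qed
qed

lemma visc_super_ge_cone:
  fixes H :: "'n::finite \<Rightarrow> real \<Rightarrow> real" and u :: "real \<Rightarrow> 'n jpt \<Rightarrow> real"
  assumes visc: "visc_super T H (FA H p0 A) u0 u"
    and pmin: "\<And>a p. H a (p0 a) \<le> H a p"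
    and lip: "\<And>x y. x \<in> J \<Longrightarrow> y \<in> J \<Longrightarrow> u0 x - u0 y \<le> L * jdist x y"
    and lb: "\<And>s y. 0 \<le> s \<Longrightarrow> s < T \<Longrightarrow> y \<in> J \<Longrightarrow> - B * (1 + jabs y) \<le> u s y"
    and BLM: "0 \<le> B" "B < M" "L \<le> M"
    and HK: "\<And>a p. \<bar>p\<bar> \<le> M \<Longrightarrow> H a p < K" "A < K" "0 \<le> K"
    and y0: "y0 \<in> J" and s: "0 \<le> s" "s < T" "y \<in> J"
  shows "u0 y0 - M * sqrt (1 + (jdist y0 y)\<^sup>2) - K * s \<le> u s y"
proof (rule ccontr)
  define \<delta> where "\<delta> = u0 y0 - M * sqrt (1 + (jdist y0 y)\<^sup>2) - K * s - u s y"
  assume "\<not> ?thesis"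
  then have "0 < \<delta>" by (simp add: \<delta>_def)
  then have "cone_barrier T (u0 y0) y0 M K (\<delta> * (T - s) / 2) s y \<le> u s y"
    using s by (intro visc_super_ge_cone_barrier[OF visc pmin lip lb BLM HK y0 _ s]) auto
  moreover have "\<delta> * (T - s) / 2 / (T - s) = \<delta> / 2" using s by (simp add: field_simps)
  ultimately show False using \<open>0 < \<delta>\<close> \<delta>_def unfolding cone_barrier_def by linarith
qed

lemma visc_super_ge_linear:
  fixes u :: "real \<Rightarrow> 'n::finite jpt \<Rightarrow> real"
  assumes visc: "visc_super T H F u0 u" and "0 < T"
    and lip: "\<And>x y. x \<in> J \<Longrightarrow> y \<in> J \<Longrightarrow> u0 x - u0 y \<le> L * jdist x y"
    and growth: "\<And>t x. 0 < t \<Longrightarrow> t < T \<Longrightarrow> x \<in> J \<Longrightarrow> - CT * (1 + jdist Jo x) \<le> u t x"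
  defines "B \<equiv> max CT (max L \<bar>u0 Jo\<bar>)"
  assumes s: "0 \<le> s" "s < T" "y \<in> J"
  shows "- B * (1 + jabs y) \<le> u s y"
proof -
  have y: "0 \<le> jabs y" "jdist Jo y = jabs y" using jabs_nonneg jdist_Jo s(3) by auto
  show ?thesis
  proof (cases "s = 0")
    case True
    have "u0 Jo - u0 y \<le> L * jabs y" using lip[of Jo y] s(3) y by (simp add: J_def)
    moreover have "L * jabs y \<le> B * jabs y" using y by (intro mult_right_mono) (auto simp: B_def)
    moreover have "u0 y \<le> u 0 y" by (rule visc_super_initial_le[OF visc \<open>0 < T\<close> s(3)])
    ultimately show ?thesis using True by (simp add: B_def algebra_simps)
  next
    case False
    then have "- CT * (1 + jabs y) \<le> u s y" using growth[of s y] s y by simp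
    moreover have "CT * (1 + jabs y) \<le> B * (1 + jabs y)" using y by (intro mult_right_mono) (auto simp: B_def)
    ultimately show ?thesis by simp
  qed
qed

lemma jlipschitz_nonneg:
  assumes "jlipschitz u0"
  shows "\<exists>L\<ge>0. \<forall>x\<in>J. \<forall>y\<in>J. u0 x - u0 y \<le> L * jdist x y"
proof -
  obtain L where L: "\<forall>x\<in>J. \<forall>y\<in>J. \<bar>u0 x - u0 y\<bar> \<le> L * jdist x y"
    using assms unfolding jlipschitz_def by blast
  have "u0 x - u0 y \<le> \<bar>L\<bar> * jdist x y" if "x \<in> J" "y \<in> J" for x y
    using L that mult_right_mono[OF abs_ge_self jdist_nonneg[OF that], of L] by fastforce
  then show ?thesis by (intro exI[of _ "\<bar>L\<bar>"]) auto
qed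

lemma visc_super_lower_bound:
  fixes H :: "'n::finite \<Rightarrow> real \<Rightarrow> real" and u :: "real \<Rightarrow> 'n jpt \<Rightarrow> real"
  assumes "0 < T" and hyp: "hyp_H H p0" and visc: "visc_super T H (FA H p0 A) u0 u"
    and lip: "\<And>x y. x \<in> J \<Longrightarrow> y \<in> J \<Longrightarrow> u0 x - u0 y \<le> L * jdist x y" "0 \<le> L"
    and growth: "\<exists>CT>0. \<forall>t x. 0 < t \<and> t < T \<and> x \<in> J \<longrightarrow> u t x \<ge> - CT * (1 + jdist Jo x)"
  shows "\<exists>M K. 0 \<le> M \<and> 0 \<le> K \<and> (\<forall>s y. 0 \<le> s \<and> s < T \<and> y \<in> J \<longrightarrow> u0 y - M - K * s \<le> u s y)"
proof -
  obtain CT where "CT > 0" and CT: "\<And>t x. 0 < t \<Longrightarrow> t < T \<Longrightarrow> x \<in> J \<Longrightarrow> - CT * (1 + jdist Jo x) \<le> u t x"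
    using growth by blast
  define B where "B = max CT (max L \<bar>u0 Jo\<bar>)"
  have B: "0 \<le> B" using \<open>CT > 0\<close> by (simp add: B_def)
  define M where "M = B + L + 1"
  obtain K0 where K0: "\<And>a p. \<bar>p\<bar> \<le> M \<Longrightarrow> H a p < K0" using hyp_H_bounded[OF hyp] by blast
  define K where "K = max K0 (max (A + 1) 0)"
  have pmin: "\<And>a p. H a (p0 a) \<le> H a p" using hyp unfolding hyp_H_def by blast
  have "u0 y - M * sqrt (1 + (jdist y y)\<^sup>2) - K * s \<le> u s y" if "0 \<le> s" "s < T" "y \<in> J" for s y
  proof (rule visc_super_ge_cone[OF visc pmin lip(1) _ B _ _ _ _ _ that(3) that])
    show "- B * (1 + jabs y) \<le> u s y" if "0 \<le> s" "s < T" "y \<in> J" for s y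
      using visc_super_ge_linear[OF visc \<open>0 < T\<close> lip(1) CT that] by (simp add: B_def)
  qed (use K0 lip(2) B in \<open>auto simp: M_def K_def less_max_iff_disj\<close>)
  then show ?thesis using B lip(2) by (intro exI[of _ M] exI[of _ K]) (auto simp: M_def K_def)
qed

section \<open>Upper bound for the scheme\<close>

lemma scheme_step_le:
  assumes "scheme H p0 A u0 dt dx U" "0 < dt"
    and pmin: "\<And>a p. H a (p0 a) \<le> H a p"
    and Kt: "- A \<le> Kt" "\<And>a. - H a (p0 a) \<le> Kt"
  shows "U (Suc n) a i \<le> U n a i + dt * Kt"
proof -
  have "(U (Suc n) a i - U n a i) / dt \<le> Kt"
  proof (cases "i = 0")
    case True
    have "(U (Suc n) a i - U n a i) / dt = - FA H p0 A (\<chi> b. (U n b 1 - U n b 0) / dx)"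
      using assms(1) True unfolding scheme_def by (simp add: eq_neg_iff_add_eq_0)
    moreover have "A \<le> FA H p0 A (\<chi> b. (U n b 1 - U n b 0) / dx)" by (simp add: FA_def)
    ultimately show ?thesis using Kt(1) by linarith
  next
    case False
    then have "(U (Suc n) a i - U n a i) / dt = - max (Hplus H p0 a ((U n a i - U n a (i - 1)) / dx))
        (Hminus H p0 a ((U n a (i + 1) - U n a i) / dx))"
      using assms(1) unfolding scheme_def by (simp add: eq_neg_iff_add_eq_0)
    moreover have "H a (p0 a) \<le> Hplus H p0 a ((U n a i - U n a (i - 1)) / dx)"
      unfolding Hplus_def by (rule pmin)
    ultimately show ?thesis using Kt(2)[of a] by linarith
  qed
  then show ?thesis using \<open>0 < dt\<close> by (simp add: pos_divide_le_eq algebra_simps)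
qed

lemma scheme_le_initial:
  assumes "scheme H p0 A u0 dt dx U" "0 < dt"
    and "\<And>a p. H a (p0 a) \<le> H a p" "- A \<le> Kt" "\<And>a. - H a (p0 a) \<le> Kt"
  shows "U n a i \<le> u0 (pt a (real i * dx)) + real n * dt * Kt"
proof (induction n)
  case 0
  then show ?case using assms(1) by (simp add: scheme_def)
next
  case (Suc n)
  then show ?case using scheme_step_le[OF assms, of n a i] by (simp add: algebra_simps)
qed

theorem lemma6p1:
  fixes T A :: real
    and H :: "'n::finite \<Rightarrow> real \<Rightarrow> real"
    and p0 :: "'n \<Rightarrow> real"
    and u0 :: "'n jpt \<Rightarrow> real"
    and u :: "real \<Rightarrow> 'n jpt \<Rightarrow> real"
  assumes "0 < T"
    and "hyp_H H p0"
    and "jlipschitz u0"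
    and "visc_super T H (FA H p0 A) u0 u"
    and "\<exists>CT>0. \<forall>t x. 0 < t \<and> t < T \<and> x \<in> J \<longrightarrow> u t x \<ge> - CT * (1 + jdist Jo x)"
  shows "\<exists>C>0. \<forall>dt dx U. 0 < dt \<and> 0 < dx \<and> CFLr H p0 A u0 dt dx \<and> scheme H p0 A u0 dt dx U \<longrightarrow>
           (\<forall>n a i s y. real n * dt \<le> T \<and> 0 \<le> s \<and> s < T \<and> y \<in> J \<longrightarrow>
              U n a i \<le> u s y + C * (1 + jdist (pt a (real i * dx)) y))"
  proof -
  obtain L where "0 \<le> L" and lip: "\<And>x y. x \<in> J \<Longrightarrow> y \<in> J \<Longrightarrow> u0 x - u0 y \<le> L * jdist x y"
    using jlipschitz_nonneg[OF assms(3)] by blast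
  obtain M K where "0 \<le> M" "0 \<le> K"
    and lower: "\<And>s y. 0 \<le> s \<Longrightarrow> s < T \<Longrightarrow> y \<in> J \<Longrightarrow> u0 y - M - K * s \<le> u s y"
    using visc_super_lower_bound[OF assms(1,2,4) lip \<open>0 \<le> L\<close> assms(5)] by blast
  have pmin: "\<And>a p. H a (p0 a) \<le> H a p" using assms(2) unfolding hyp_H_def by blast
  define Kt where "Kt = \<bar>A\<bar> + (\<Sum>a\<in>UNIV. \<bar>H a (p0 a)\<bar>)"
  have sum: "\<bar>H a (p0 a)\<bar> \<le> (\<Sum>b\<in>UNIV. \<bar>H b (p0 b)\<bar>)" "0 \<le> (\<Sum>b\<in>UNIV. \<bar>H b (p0 b)\<bar>)" for a
    by (auto intro: member_le_sum sum_nonneg)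
  have Kt: "- A \<le> Kt" "- H a (p0 a) \<le> Kt" "0 \<le> Kt" for a
    using sum(1)[of a] sum(2) abs_ge_minus_self[of A] abs_ge_minus_self[of "H a (p0 a)"] abs_ge_zero[of A]
    unfolding Kt_def by linarith+
  define C where "C = M + K * T + T * Kt + L + 1"
  have "0 \<le> K * T" "0 \<le> T * Kt" using \<open>0 \<le> K\<close> Kt(3) assms(1) by simp_all
  then have C: "0 < C" "M + K * T + T * Kt \<le> C" "L \<le> C"
    using \<open>0 \<le> M\<close> \<open>0 \<le> L\<close> by (simp_all add: C_def)
  show ?thesis
  proof (intro exI[of _ C] conjI allI impI)
    show "0 < C" by (fact C(1))
    fix dt dx s :: real and U :: "nat \<Rightarrow> 'n \<Rightarrow> nat \<Rightarrow> real" and n i :: nat and a :: 'n and y :: "'n jpt"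
    assume scheme: "0 < dt \<and> 0 < dx \<and> CFLr H p0 A u0 dt dx \<and> scheme H p0 A u0 dt dx U"
      and sy: "real n * dt \<le> T \<and> 0 \<le> s \<and> s < T \<and> y \<in> J"
    define x where "x = pt a (real i * dx)"
    have x: "x \<in> J" using scheme by (simp add: x_def pt_in_J)
    then have "0 \<le> jdist x y" using sy jdist_nonneg by blast
    have "U n a i \<le> u0 x + real n * dt * Kt"
      using scheme_le_initial[of H p0 A u0 dt dx U Kt n a i] pmin Kt(1,2) scheme by (simp add: x_def)
    also have "\<dots> \<le> u0 y + L * jdist x y + T * Kt"
      using lip[OF x, of y] sy Kt(3) mult_right_mono[of "real n * dt" T Kt] by auto
    also have "\<dots> \<le> u s y + M + K * T + L * jdist x y + T * Kt"
      using lower[of s y] sy mult_left_mono[of s T K] \<open>0 \<le> K\<close> by auto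
    also have "\<dots> \<le> u s y + C * (1 + jdist x y)"
      using C(2) mult_right_mono[OF C(3) \<open>0 \<le> jdist x y\<close>] by (simp add: algebra_simps)
    finally show "U n a i \<le> u s y + C * (1 + jdist (pt a (real i * dx)) y)" by (simp add: x_def)
  qed
qed

end
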